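(* Let $\mathcal{T}$ be a set of finite simplicial complexes, and let $\Lambda$ be a real-valued function on $\mathcal{T}$. Suppose there are real numbers $b_{-1}, b_0, b_1, \ldots$ such that $\Lambda(K) = \sum_{i=-1}^{\dim K} b_i f_i(K)$ for all $K \in \mathcal{T}$. \begin{enumerate} \item If all the simplicial complexes in $\mathcal{T}$ have the same non-zero Euler characteristic, then $\Lambda$ is combinatorially locally determined. \item If $b_{-1} = 0$, then $\Lambda$ is combinatorially locally determined. \item If $b_{-1} \neq 0$, and if $\mathcal{T}$ contains all flag $d$-spheres for some odd integer $d \geq 3$, then $\Lambda$ is not combinatorially locally determined. \end{enumerate}
   Context: All simplicial complexes are finite. For a simplicial complex $K$, $f_i(K)$ denotes the number of $i$-simplices of $K$ for $i \in \{0,1,\ldots,\dim K\}$, with the convention $f_{-1}(K) = 1$ and $f_i(K) = 0$ for all other integers $i$. $\operatorname{Vert}(K)$ is the set of vertices of $K$, and $\operatorname{lk}(v,K)$ is the link of the vertex $v$ in $K$. For a set $\mathcal{T}$ of simplicial complexes let $\operatorname{Links}(\mathcal{T}) = \{\operatorname{lk}(v,K) \mid K \in \mathcal{T},\ v \in \operatorname{Vert}(K)\}$. A real-valued function $\Lambda$ on $\mathcal{T}$ is combinatorially locally determined if there is a real-valued function $h$ on $\operatorname{Links}(\mathcal{T})$ that is invariant under combinatorial equivalence (isomorphic complexes get the same value) such that $\Lambda(K) = \sum_{v \in \operatorname{Vert}(K)} h(\operatorname{lk}(v,K))$ for every $K \in \mathcal{T}$. A simplicial complex $K$ is a flag complex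 if for every subset $T \subseteq \operatorname{Vert}(K)$ whose vertices are pairwise joined by edges, $T$ is the vertex set of a face of $K$. A flag $d$-sphere is a flag simplicial complex whose underlying space is homeomorphic to the $d$-sphere. *)

theory Defs
  imports "HOL-Analysis.Analysis"
begin

text \<open>Finite abstract simplicial complexes over a vertex type 'a, represented as the
set of their faces. The empty face is included, which realises the convention f_{-1} = 1.\<close>

definition simplicial_complex :: "'a set set \<Rightarrow> bool" where
  "simplicial_complex K \<longleftrightarrow> finite K \<and> (\<forall>\<sigma>\<in>K. finite \<sigma>) \<and> {} \<in> K \<and>
     (\<forall>\<sigma>\<in>K. \<forall>\<tau>. \<tau> \<subseteq> \<sigma> \<longrightarrow> \<tau> \<in> K)"

definition Vert :: "'a set set \<Rightarrow> 'a set" where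
  "Vert K = {v. {v} \<in> K}"

definition cdim :: "'a set set \<Rightarrow> int" where
  "cdim K = Max ((\<lambda>\<sigma>. int (card \<sigma>) - 1) ` K)"

definition fnum :: "'a set set \<Rightarrow> int \<Rightarrow> nat" where
  "fnum K i = card {\<sigma>\<in>K. int (card \<sigma>) = i + 1}"

definition euler_char :: "'a set set \<Rightarrow> int" where
  "euler_char K = (\<Sum>i\<in>{0..cdim K}. (-1) ^ nat i * int (fnum K i))"

definition link :: "'a \<Rightarrow> 'a set set \<Rightarrow> 'a set set" where
  "link v K = {\<sigma>\<in>K. v \<notin> \<sigma> \<and> insert v \<sigma> \<in> K}"

definition Links :: "'a set set set \<Rightarrow> 'a set set set" where
  "Links T = {link v K | v K. K \<in> T \<and> v \<in> Vert K}"

definition comb_equiv :: "'a set set \<Rightarrow> 'a set set \<Rightarrow> bool" where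
  "comb_equiv K L \<longleftrightarrow> (\<exists>\<phi>. bij_betw \<phi> (Vert K) (Vert L) \<and> (\<lambda>\<sigma>. \<phi> ` \<sigma>) ` K = L)"

definition comb_locally_determined :: "'a set set set \<Rightarrow> ('a set set \<Rightarrow> real) \<Rightarrow> bool" where
  "comb_locally_determined T \<Lambda> \<longleftrightarrow>
     (\<exists>h :: 'a set set \<Rightarrow> real.
        (\<forall>L1\<in>Links T. \<forall>L2\<in>Links T. comb_equiv L1 L2 \<longrightarrow> h L1 = h L2) \<and>
        (\<forall>K\<in>T. \<Lambda> K = (\<Sum>v\<in>Vert K. h (link v K))))"

definition flag_complex :: "'a set set \<Rightarrow> bool" where
  "flag_complex K \<longleftrightarrow> simplicial_complex K \<and>
     (\<forall>S. S \<subseteq> Vert K \<longrightarrow> (\<forall>u\<in>S. \<forall>w\<in>S. u \<noteq> w \<longrightarrow> {u, w} \<in> K) \<longrightarrow> S \<in> K)"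

text \<open>Geometric realisation of K inside the space of functions 'a => real (barycentric
coordinates), carrying the subspace topology of the product topology.\<close>
definition realization :: "'a set set \<Rightarrow> ('a \<Rightarrow> real) set" where
  "realization K = {x. (\<forall>v. 0 \<le> x v) \<and> {v. x v \<noteq> 0} \<in> K \<and> (\<Sum>v\<in>{v. x v \<noteq> 0}. x v) = 1}"

definition realization_top :: "'a set set \<Rightarrow> ('a \<Rightarrow> real) topology" where
  "realization_top K = subtopology (powertop_real UNIV) (realization K)"

definition flag_sphere :: "nat \<Rightarrow> 'a set set \<Rightarrow> bool" where
  "flag_sphere d K \<longleftrightarrow> flag_complex K \<and> realization_top K homeomorphic_space nsphere d"

end

theory Submission
  imports Defs
begin

text \<open>
  Double counting the pairs (vertex, face containing it) shows that a linear combination of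
  face numbers without the term in \<open>f\<^sub>-\<^sub>1\<close> is a sum of local weights over vertex links. The
  constant \<open>b\<^sub>-\<^sub>1 f\<^sub>-\<^sub>1\<close> can also be distributed over the vertices once the Euler characteristic
  is a fixed non-zero number, since \<open>\<chi>\<close> is itself a linear combination of the \<open>f\<^sub>i\<close> with \<open>i \<ge> 0\<close>.

  Conversely, subtracting the local part from a combinatorially locally determined \<open>\<Lambda>\<close> leaves
  a link invariant \<open>G\<close> whose vertex sums equal \<open>b\<^sub>-\<^sub>1\<close> on every complex of \<open>\<T>\<close>. For
  \<open>d = 2k - 1\<close> consider the joins \<open>K\<^sub>j\<close> of \<open>j\<close> pentagons and \<open>k - j\<close> squares, which are flag
  \<open>d\<close>-spheres. The link of a pentagon vertex of \<open>K\<^sub>j\<close> is isomorphic to the link of a square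
  vertex of \<open>K\<^sub>j\<^sub>-\<^sub>1\<close>, so with \<open>U\<^sub>j\<close> the value of \<open>G\<close> at a square-vertex link of \<open>K\<^sub>j\<close> we get
  \<open>b\<^sub>-\<^sub>1 = 5 j U\<^sub>j\<^sub>-\<^sub>1 + 4 (k - j) U\<^sub>j\<close> for \<open>0 \<le> j \<le> k\<close>. Summing these equations with the
  weights \<open>(k choose j) (-4)\<^sup>j 5\<^sup>k\<^sup>-\<^sup>j\<close> telescopes to \<open>b\<^sub>-\<^sub>1 (5 - 4)\<^sup>k = 0\<close>. That \<open>K\<^sub>j\<close>
  is a sphere is seen by drawing every polygon on the \<open>\<ell>\<^sub>1\<close> unit circle of its own coordinate
  plane, which turns the realization of the join into the \<open>\<ell>\<^sub>1\<close> unit sphere.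
\<close>

section \<open>Face numbers as sums over vertex links\<close>

lemma simplicial_complex_finite: "simplicial_complex K \<Longrightarrow> finite K"
  and simplicial_complex_finite_face: "simplicial_complex K \<Longrightarrow> \<sigma> \<in> K \<Longrightarrow> finite \<sigma>"
  and simplicial_complex_empty: "simplicial_complex K \<Longrightarrow> {} \<in> K"
  and simplicial_complex_subface: "simplicial_complex K \<Longrightarrow> \<sigma> \<in> K \<Longrightarrow> \<tau> \<subseteq> \<sigma> \<Longrightarrow> \<tau> \<in> K"
  unfolding simplicial_complex_def by blast+

lemma face_subset_Vert: "simplicial_complex K \<Longrightarrow> \<sigma> \<in> K \<Longrightarrow> \<sigma> \<subseteq> Vert K"
  unfolding Vert_def using simplicial_complex_subface by blast

lemma finite_Vert:
  assumes K: "simplicial_complex K"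
  shows "finite (Vert K)"
proof (rule finite_subset)
  show "Vert K \<subseteq> \<Union>K" unfolding Vert_def by auto
  show "finite (\<Union>K)" using K simplicial_complex_finite simplicial_complex_finite_face by blast
qed

lemma card_nonempty_face_ge_1:
  "simplicial_complex K \<Longrightarrow> \<sigma> \<in> K - {{}} \<Longrightarrow> card \<sigma> \<ge> 1"
  using simplicial_complex_finite_face by (auto simp: Suc_le_eq card_gt_0_iff)

lemma simplicial_complex_link:
  "simplicial_complex K \<Longrightarrow> v \<in> Vert K \<Longrightarrow> simplicial_complex (link v K)"
  unfolding simplicial_complex_def link_def Vert_def by (auto simp: insert_mono) (meson insert_mono)

lemma sum_Vert_sum_link:
  fixes w :: "nat \<Rightarrow> real"
  assumes K: "simplicial_complex K"
  shows "(\<Sum>v\<in>Vert K. \<Sum>\<tau>\<in>link v K. w (card \<tau>)) = (\<Sum>\<sigma>\<in>K. real (card \<sigma>) * w (card \<sigma> - 1))"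
proof -
  have link_as_star: "(\<Sum>\<tau>\<in>link v K. w (card \<tau>)) = (\<Sum>\<sigma>\<in>{\<sigma>\<in>K. v \<in> \<sigma>}. w (card \<sigma> - 1))" for v
  proof (rule sum.reindex_bij_witness[where i="\<lambda>\<sigma>. \<sigma> - {v}" and j="insert v"])
    fix \<sigma> assume \<sigma>: "\<sigma> \<in> {\<sigma>\<in>K. v \<in> \<sigma>}"
    then show "insert v (\<sigma> - {v}) = \<sigma>" by auto
    from \<sigma> have "\<sigma> - {v} \<in> K" using simplicial_complex_subface[OF K] by blast
    with \<sigma> show "\<sigma> - {v} \<in> link v K" unfolding link_def by (auto simp: insert_absorb)
  next
    fix \<tau> assume \<tau>: "\<tau> \<in> link v K"
    then show "insert v \<tau> - {v} = \<tau>" "insert v \<tau> \<in> {\<sigma>\<in>K. v \<in> \<sigma>}" unfolding link_def by auto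
    from \<tau> have "finite \<tau>" "v \<notin> \<tau>" using simplicial_complex_finite_face[OF K] unfolding link_def by auto
    then show "w (card (insert v \<tau>) - 1) = w (card \<tau>)" by simp
  qed
  have "(\<Sum>v\<in>Vert K. \<Sum>\<tau>\<in>link v K. w (card \<tau>)) = (\<Sum>v\<in>Vert K. \<Sum>\<sigma>\<in>{\<sigma>\<in>K. v \<in> \<sigma>}. w (card \<sigma> - 1))"
    by (simp add: link_as_star)
  also have "\<dots> = (\<Sum>\<sigma>\<in>K. \<Sum>v\<in>{v\<in>Vert K. v \<in> \<sigma>}. w (card \<sigma> - 1))"
    by (rule sum.swap_restrict[OF finite_Vert[OF K] simplicial_complex_finite[OF K]])
  also have "\<dots> = (\<Sum>\<sigma>\<in>K. real (card \<sigma>) * w (card \<sigma> - 1))"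
  proof (rule sum.cong[OF refl])
    fix \<sigma> assume "\<sigma> \<in> K"
    then have "{v\<in>Vert K. v \<in> \<sigma>} = \<sigma>" using face_subset_Vert[OF K] by auto
    then show "(\<Sum>v\<in>{v\<in>Vert K. v \<in> \<sigma>}. w (card \<sigma> - 1)) = real (card \<sigma>) * w (card \<sigma> - 1)" by simp
  qed
  finally show ?thesis .
qed

lemma card_face_le_cdim:
  assumes K: "simplicial_complex K" and \<sigma>: "\<sigma> \<in> K"
  shows "int (card \<sigma>) - 1 \<le> cdim K"
  unfolding cdim_def using \<sigma> simplicial_complex_finite[OF K] by (intro Max_ge) auto

lemma sum_fnum_eq_sum_faces:
  fixes F :: "int \<Rightarrow> real"
  assumes K: "simplicial_complex K"
  shows "(\<Sum>i\<in>{-1..cdim K}. F i * real (fnum K i)) = F (-1) + (\<Sum>\<sigma>\<in>K - {{}}. F (int (card \<sigma>) - 1))"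
proof -
  have "(\<Sum>i\<in>{-1..cdim K}. F i * real (fnum K i)) =
      (\<Sum>i\<in>{-1..cdim K}. \<Sum>\<sigma>\<in>{\<sigma>\<in>K. int (card \<sigma>) - 1 = i}. F (int (card \<sigma>) - 1))"
    unfolding fnum_def
    by (intro sum.cong refl) (auto simp: algebra_simps intro!: arg_cong[where f="\<lambda>x. real (card x)"])
  also have "\<dots> = (\<Sum>\<sigma>\<in>K. F (int (card \<sigma>) - 1))"
    by (rule sum.group[OF simplicial_complex_finite[OF K]]) (auto dest: card_face_le_cdim[OF K])
  also have "\<dots> = F (-1) + (\<Sum>\<sigma>\<in>K - {{}}. F (int (card \<sigma>) - 1))"
    using simplicial_complex_empty[OF K] simplicial_complex_finite[OF K] by (simp add: sum.remove)
  finally show ?thesis .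
qed

lemma euler_char_eq_sum_faces:
  assumes K: "simplicial_complex K"
  shows "real_of_int (euler_char K) = (\<Sum>\<sigma>\<in>K - {{}}. (-1) ^ nat (int (card \<sigma>) - 1))"
proof -
  define F :: "int \<Rightarrow> real" where "F i = (if i \<ge> 0 then (-1) ^ nat i else 0)" for i
  have "real_of_int (euler_char K) = (\<Sum>i\<in>{0..cdim K}. F i * real (fnum K i))"
    unfolding euler_char_def F_def by simp
  also have "\<dots> = (\<Sum>i\<in>{-1..cdim K}. F i * real (fnum K i))"
    by (rule sum.mono_neutral_left) (auto simp: F_def)
  also have "\<dots> = (\<Sum>\<sigma>\<in>K - {{}}. F (int (card \<sigma>) - 1))"
    by (simp add: sum_fnum_eq_sum_faces[OF K] F_def)
  also have "\<dots> = (\<Sum>\<sigma>\<in>K - {{}}. (-1) ^ nat (int (card \<sigma>) - 1))"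
  proof (rule sum.cong[OF refl])
    fix \<sigma> assume "\<sigma> \<in> K - {{}}"
    with card_nonempty_face_ge_1[OF K] have "card \<sigma> \<ge> 1" by blast
    then show "F (int (card \<sigma>) - 1) = (-1) ^ nat (int (card \<sigma>) - 1)" by (simp add: F_def)
  qed
  finally show ?thesis .
qed

text \<open>Each face \<open>\<sigma>\<close> reappears, with one vertex fewer, in the links of its \<open>card \<sigma>\<close> vertices;
  hence the factor \<open>1 / (card \<tau> + 1)\<close>.\<close>

definition link_weight :: "(int \<Rightarrow> real) \<Rightarrow> 'a set set \<Rightarrow> real" where
  "link_weight a L = (\<Sum>\<tau>\<in>L. a (int (card \<tau>)) / (real (card \<tau>) + 1))"

lemma sum_link_weight:
  assumes K: "simplicial_complex K"
  shows "(\<Sum>v\<in>Vert K. link_weight a (link v K)) = (\<Sum>\<sigma>\<in>K - {{}}. a (int (card \<sigma>) - 1))"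
proof -
  have "(\<Sum>v\<in>Vert K. link_weight a (link v K)) =
      (\<Sum>\<sigma>\<in>K. real (card \<sigma>) * (a (int (card \<sigma> - 1)) / (real (card \<sigma> - 1) + 1)))"
    unfolding link_weight_def by (rule sum_Vert_sum_link[OF K])
  also have "\<dots> = (\<Sum>\<sigma>\<in>K - {{}}. real (card \<sigma>) * (a (int (card \<sigma> - 1)) / (real (card \<sigma> - 1) + 1)))"
    using simplicial_complex_finite[OF K] by (intro sum.mono_neutral_right) auto
  also have "\<dots> = (\<Sum>\<sigma>\<in>K - {{}}. a (int (card \<sigma>) - 1))"
  proof (rule sum.cong[OF refl])
    fix \<sigma> assume "\<sigma> \<in> K - {{}}"
    with card_nonempty_face_ge_1[OF K] have "card \<sigma> \<ge> 1" by blast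
    then show "real (card \<sigma>) * (a (int (card \<sigma> - 1)) / (real (card \<sigma> - 1) + 1)) = a (int (card \<sigma>) - 1)"
      by (simp add: of_nat_diff)
  qed
  finally show ?thesis .
qed

lemma link_weight_comb_equiv:
  assumes L: "simplicial_complex L" and LL': "comb_equiv L L'"
  shows "link_weight a L = link_weight a L'"
proof -
  from LL' obtain \<phi> where bij: "bij_betw \<phi> (Vert L) (Vert L')" and L': "(\<lambda>\<sigma>. \<phi> ` \<sigma>) ` L = L'"
    unfolding comb_equiv_def by blast
  have inj: "inj_on \<phi> (Vert L)" using bij bij_betw_def by blast
  have inj_faces: "inj_on (\<lambda>\<sigma>. \<phi> ` \<sigma>) L"
    using inj face_subset_Vert[OF L] by (auto simp: inj_on_def inj_on_image_eq_iff)
  have "link_weight a L' = (\<Sum>\<tau>\<in>L. a (int (card (\<phi> ` \<tau>))) / (real (card (\<phi> ` \<tau>)) + 1))"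
    unfolding link_weight_def L'[symmetric] by (simp add: sum.reindex[OF inj_faces])
  also have "\<dots> = link_weight a L" unfolding link_weight_def
    using inj face_subset_Vert[OF L] by (intro sum.cong refl) (auto simp: card_image inj_on_subset)
  finally show ?thesis by simp
qed

lemma link_weight_invariant_on_Links:
  assumes "\<forall>K\<in>T. simplicial_complex K"
  shows "\<forall>L1\<in>Links T. \<forall>L2\<in>Links T. comb_equiv L1 L2 \<longrightarrow> link_weight a L1 = link_weight a L2"
proof (intro ballI impI)
  fix L1 L2 assume "L1 \<in> Links T" "L2 \<in> Links T" "comb_equiv L1 L2"
  from \<open>L1 \<in> Links T\<close> obtain v K where "L1 = link v K" "K \<in> T" "v \<in> Vert K"
    unfolding Links_def by auto
  with assms have "simplicial_complex L1" by (simp add: simplicial_complex_link)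
  then show "link_weight a L1 = link_weight a L2" using \<open>comb_equiv L1 L2\<close> by (rule link_weight_comb_equiv)
qed

lemma comb_locally_determined_sum_faces:
  assumes complexes: "\<forall>K\<in>T. simplicial_complex K"
    and \<Lambda>: "\<forall>K\<in>T. \<Lambda> K = (\<Sum>\<sigma>\<in>K - {{}}. a (int (card \<sigma>) - 1))"
  shows "comb_locally_determined T \<Lambda>"
  unfolding comb_locally_determined_def
proof (intro exI conjI)
  show "\<forall>L1\<in>Links T. \<forall>L2\<in>Links T. comb_equiv L1 L2 \<longrightarrow> link_weight a L1 = link_weight a L2"
    by (rule link_weight_invariant_on_Links[OF complexes])
  show "\<forall>K\<in>T. \<Lambda> K = (\<Sum>v\<in>Vert K. link_weight a (link v K))"
    using \<Lambda> complexes by (simp add: sum_link_weight)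
qed

lemma comb_locally_determined_if_euler_char_const:
  assumes complexes: "\<forall>K\<in>T. simplicial_complex K"
    and \<Lambda>: "\<forall>K\<in>T. \<Lambda> K = (\<Sum>i\<in>{-1..cdim K}. b i * real (fnum K i))"
    and c: "c \<noteq> 0" "\<forall>K\<in>T. euler_char K = c"
  shows "comb_locally_determined T \<Lambda>"
proof (rule comb_locally_determined_sum_faces[OF complexes])
  define a where "a i = b i + b (-1) / real_of_int c * (-1) ^ nat i" for i
  show "\<forall>K\<in>T. \<Lambda> K = (\<Sum>\<sigma>\<in>K - {{}}. a (int (card \<sigma>) - 1))"
  proof
    fix K assume "K \<in> T"
    then have K: "simplicial_complex K" using complexes by blast
    have "(\<Sum>\<sigma>\<in>K - {{}}. a (int (card \<sigma>) - 1)) = (\<Sum>\<sigma>\<in>K - {{}}. b (int (card \<sigma>) - 1))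
        + b (-1) / real_of_int c * (\<Sum>\<sigma>\<in>K - {{}}. (-1) ^ nat (int (card \<sigma>) - 1))"
      unfolding a_def sum.distrib by (simp add: sum_distrib_left)
    also have "(\<Sum>\<sigma>\<in>K - {{}}. (-1) ^ nat (int (card \<sigma>) - 1)) = real_of_int c"
      using euler_char_eq_sum_faces[OF K] c \<open>K \<in> T\<close> by simp
    finally show "\<Lambda> K = (\<Sum>\<sigma>\<in>K - {{}}. a (int (card \<sigma>) - 1))"
      using \<Lambda> \<open>K \<in> T\<close> sum_fnum_eq_sum_faces[OF K, of b] c by simp
  qed
qed

lemma comb_locally_determined_if_empty_coeff_0:
  assumes complexes: "\<forall>K\<in>T. simplicial_complex K"
    and \<Lambda>: "\<forall>K\<in>T. \<Lambda> K = (\<Sum>i\<in>{-1..cdim K}. b i * real (fnum K i))"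
    and b: "b (-1) = 0"
  shows "comb_locally_determined T \<Lambda>"
  by (rule comb_locally_determined_sum_faces[OF complexes, where a=b])
     (use \<Lambda> complexes b in \<open>simp add: sum_fnum_eq_sum_faces\<close>)

lemma comb_locally_determined_obtains_link_invariant:
  assumes complexes: "\<forall>K\<in>T. simplicial_complex K"
    and \<Lambda>: "\<forall>K\<in>T. \<Lambda> K = (\<Sum>i\<in>{-1..cdim K}. b i * real (fnum K i))"
    and "comb_locally_determined T \<Lambda>"
  obtains G :: "'a set set \<Rightarrow> real"
  where "\<forall>L1\<in>Links T. \<forall>L2\<in>Links T. comb_equiv L1 L2 \<longrightarrow> G L1 = G L2"
    and "\<forall>K\<in>T. (\<Sum>v\<in>Vert K. G (link v K)) = b (-1)"
proof -
  obtain h :: "'a set set \<Rightarrow> real" where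
    h_invariant: "\<forall>L1\<in>Links T. \<forall>L2\<in>Links T. comb_equiv L1 L2 \<longrightarrow> h L1 = h L2" and
    h_sum: "\<forall>K\<in>T. \<Lambda> K = (\<Sum>v\<in>Vert K. h (link v K))"
    using assms(3) unfolding comb_locally_determined_def by blast
  define G where "G L = h L - link_weight b L" for L
  have "\<forall>L1\<in>Links T. \<forall>L2\<in>Links T. comb_equiv L1 L2 \<longrightarrow> G L1 = G L2"
    using h_invariant link_weight_invariant_on_Links[OF complexes, of b] unfolding G_def by metis
  moreover have "\<forall>K\<in>T. (\<Sum>v\<in>Vert K. G (link v K)) = b (-1)"
  proof
    fix K assume "K \<in> T"
    then have K: "simplicial_complex K" using complexes by blast
    have "(\<Sum>v\<in>Vert K. G (link v K)) = \<Lambda> K - (\<Sum>\<sigma>\<in>K - {{}}. b (int (card \<sigma>) - 1))"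
      unfolding G_def sum_subtractf sum_link_weight[OF K] using h_sum \<open>K \<in> T\<close> by simp
    then show "(\<Sum>v\<in>Vert K. G (link v K)) = b (-1)"
      using \<Lambda> \<open>K \<in> T\<close> sum_fnum_eq_sum_faces[OF K, of b] by simp
  qed
  ultimately show thesis by (rule that)
qed

section \<open>Clique complexes and their images\<close>

definition clique_complex :: "('b \<Rightarrow> 'b \<Rightarrow> bool) \<Rightarrow> 'b set \<Rightarrow> 'b set set" where
  "clique_complex R A = {S. S \<subseteq> A \<and> pairwise R S}"

definition complex_image :: "('b \<Rightarrow> 'a) \<Rightarrow> 'b set set \<Rightarrow> 'a set set" where
  "complex_image f K = (\<lambda>\<sigma>. f ` \<sigma>) ` K"

lemma simplicial_complex_clique_complex: "finite A \<Longrightarrow> simplicial_complex (clique_complex R A)"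
  unfolding simplicial_complex_def clique_complex_def pairwise_def by (auto intro: finite_subset)

lemma Vert_clique_complex: "Vert (clique_complex R A) = A"
  unfolding Vert_def clique_complex_def pairwise_def by auto

lemma link_clique_complex:
  assumes "symp R" and "u \<in> A"
  shows "link u (clique_complex R A) = clique_complex R {w \<in> A. w \<noteq> u \<and> R u w}"
  using assms unfolding link_def clique_complex_def pairwise_def symp_def by auto

lemma comb_equiv_clique_complex:
  assumes bij: "bij_betw \<phi> A B" and R: "\<forall>a\<in>A. \<forall>b\<in>A. R a b \<longleftrightarrow> R' (\<phi> a) (\<phi> b)"
  shows "comb_equiv (clique_complex R A) (clique_complex R' B)"
  unfolding comb_equiv_def Vert_clique_complex
proof (intro exI conjI)
  show "bij_betw \<phi> A B" by fact
  have inj: "inj_on \<phi> A" and img: "\<phi> ` A = B" using bij by (auto simp: bij_betw_def)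
  show "(`) \<phi> ` clique_complex R A = clique_complex R' B"
  proof
    show "(`) \<phi> ` clique_complex R A \<subseteq> clique_complex R' B"
      using R img unfolding clique_complex_def pairwise_def by fastforce
    show "clique_complex R' B \<subseteq> (`) \<phi> ` clique_complex R A"
    proof
      fix S assume S: "S \<in> clique_complex R' B"
      define S' where "S' = A \<inter> \<phi> -` S"
      have "S = \<phi> ` S'" using S img unfolding S'_def clique_complex_def by auto
      moreover have "S' \<in> clique_complex R A"
        using S R inj unfolding S'_def clique_complex_def pairwise_def inj_on_def by blast
      ultimately show "S \<in> (`) \<phi> ` clique_complex R A" by blast
    qed
  qed
qed

lemma simplicial_complex_complex_image:
  assumes K: "simplicial_complex K"
  shows "simplicial_complex (complex_image f K)"
  unfolding simplicial_complex_def complex_image_def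
proof (intro conjI ballI allI impI)
  show "finite ((`) f ` K)" using simplicial_complex_finite[OF K] by simp
  show "{} \<in> (`) f ` K" using simplicial_complex_empty[OF K] by (metis image_empty imageI)
next
  fix s assume "s \<in> (`) f ` K"
  then show "finite s" using simplicial_complex_finite_face[OF K] by auto
next
  fix s t assume s: "s \<in> (`) f ` K" and t: "t \<subseteq> s"
  then obtain x where x: "x \<in> K" "s = f ` x" by auto
  have "t = f ` (x \<inter> f -` t)" using x t by auto
  moreover have "x \<inter> f -` t \<in> K" using simplicial_complex_subface[OF K x(1)] by blast
  ultimately show "t \<in> (`) f ` K" by blast
qed

lemma Vert_complex_image:
  assumes f: "inj f"
  shows "Vert (complex_image f K) = f ` Vert K"
proof
  show "f ` Vert K \<subseteq> Vert (complex_image f K)" unfolding Vert_def complex_image_def by force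
  show "Vert (complex_image f K) \<subseteq> f ` Vert K"
  proof
    fix x assume "x \<in> Vert (complex_image f K)"
    then obtain y where y: "y \<in> K" "{x} = f ` y" unfolding Vert_def complex_image_def by auto
    then obtain u where "u \<in> y" "f u = x" by (metis imageE insertI1)
    with y f have "y = {u}" by (auto dest: injD)
    then show "x \<in> f ` Vert K" using y \<open>f u = x\<close> unfolding Vert_def by auto
  qed
qed

lemma link_complex_image:
  assumes f: "inj f"
  shows "link (f u) (complex_image f K) = complex_image f (link u K)"
proof
  show "complex_image f (link u K) \<subseteq> link (f u) (complex_image f K)"
  proof
    fix y assume "y \<in> complex_image f (link u K)"
    then obtain x where x: "x \<in> K" "u \<notin> x" "insert u x \<in> K" "y = f ` x"
      unfolding complex_image_def link_def by auto
    have "f u \<notin> f ` x" using x f by (auto dest: injD)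
    moreover have "insert (f u) (f ` x) \<in> complex_image f K"
      unfolding complex_image_def using x(3) by (metis image_insert imageI)
    ultimately show "y \<in> link (f u) (complex_image f K)"
      unfolding link_def complex_image_def using x by auto
  qed
  show "link (f u) (complex_image f K) \<subseteq> complex_image f (link u K)"
  proof
    fix y assume "y \<in> link (f u) (complex_image f K)"
    then obtain x z where x: "x \<in> K" "y = f ` x" "f u \<notin> y" "z \<in> K" "insert (f u) y = f ` z"
      unfolding complex_image_def link_def by auto
    have "z = insert u x" using x f by (metis image_insert inj_image_eq_iff)
    then show "y \<in> complex_image f (link u K)" using x unfolding link_def complex_image_def by auto
  qed
qed

lemma comb_equiv_complex_image:
  assumes f: "inj f" and LL': "comb_equiv L L'"
  shows "comb_equiv (complex_image f L) (complex_image f L')"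
proof -
  from LL' obtain \<phi> where bij: "bij_betw \<phi> (Vert L) (Vert L')" and L': "(\<lambda>\<sigma>. \<phi> ` \<sigma>) ` L = L'"
    unfolding comb_equiv_def by blast
  define \<psi> where "\<psi> = f \<circ> \<phi> \<circ> inv f"
  have "bij_betw \<psi> (f ` Vert L) (f ` Vert L')"
  proof -
    have "bij_betw (inv f) (f ` Vert L) (Vert L)"
      using bij_betw_inv_into_subset[of f UNIV "range f" "Vert L" "f ` Vert L"] f by (simp add: bij_betw_def)
    moreover have "bij_betw f (Vert L') (f ` Vert L')"
      by (rule bij_betw_imageI) (use f in \<open>auto intro: inj_on_subset\<close>)
    ultimately show ?thesis unfolding \<psi>_def using bij by (metis bij_betw_trans)
  qed
  moreover have "(\<lambda>\<sigma>. \<psi> ` \<sigma>) ` complex_image f L = complex_image f L'"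
    unfolding complex_image_def L'[symmetric] \<psi>_def using f by (auto simp: image_image image_comp)
  ultimately show ?thesis unfolding comb_equiv_def using Vert_complex_image[OF f] by metis
qed

lemma mem_complex_image_clique_complex:
  assumes e: "inj e"
  shows "S \<in> complex_image e (clique_complex R A) \<longleftrightarrow>
    S \<subseteq> e ` A \<and> (\<forall>a\<in>A. \<forall>b\<in>A. a \<noteq> b \<longrightarrow> e a \<in> S \<longrightarrow> e b \<in> S \<longrightarrow> R a b)"
proof
  assume "S \<in> complex_image e (clique_complex R A)"
  then obtain T where "T \<subseteq> A" "pairwise R T" "S = e ` T"
    unfolding complex_image_def clique_complex_def by auto
  with e show "S \<subseteq> e ` A \<and> (\<forall>a\<in>A. \<forall>b\<in>A. a \<noteq> b \<longrightarrow> e a \<in> S \<longrightarrow> e b \<in> S \<longrightarrow> R a b)"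
    unfolding pairwise_def by (auto dest: injD)
next
  assume S: "S \<subseteq> e ` A \<and> (\<forall>a\<in>A. \<forall>b\<in>A. a \<noteq> b \<longrightarrow> e a \<in> S \<longrightarrow> e b \<in> S \<longrightarrow> R a b)"
  then have "S = e ` (A \<inter> e -` S)" and "A \<inter> e -` S \<in> clique_complex R A"
    unfolding clique_complex_def pairwise_def by auto
  then show "S \<in> complex_image e (clique_complex R A)" unfolding complex_image_def by blast
qed

lemma flag_complex_complex_image_clique_complex:
  assumes e: "inj e" and A: "finite A"
  shows "flag_complex (complex_image e (clique_complex R A))"
  unfolding flag_complex_def
proof (intro conjI allI impI)
  show "simplicial_complex (complex_image e (clique_complex R A))"
    by (rule simplicial_complex_complex_image[OF simplicial_complex_clique_complex[OF A]])
  fix S assume S: "S \<subseteq> Vert (complex_image e (clique_complex R A))"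
    and edges: "\<forall>u\<in>S. \<forall>w\<in>S. u \<noteq> w \<longrightarrow> {u, w} \<in> complex_image e (clique_complex R A)"
  have "R a b" if "a \<in> A" "b \<in> A" "a \<noteq> b" "e a \<in> S" "e b \<in> S" for a b
  proof -
    have "{e a, e b} \<in> complex_image e (clique_complex R A)"
      using edges that e by (auto dest: injD)
    then show "R a b" using that unfolding mem_complex_image_clique_complex[OF e] by blast
  qed
  moreover have "S \<subseteq> e ` A" using S by (simp add: Vert_complex_image[OF e] Vert_clique_complex)
  ultimately show "S \<in> complex_image e (clique_complex R A)"
    unfolding mem_complex_image_clique_complex[OF e] by blast
qed

section \<open>Joins of squares and pentagons\<close>

text \<open>The square is the cycle 0-1-2-3 and the pentagon the cycle 0-3-2-1-4; with these labels
  vertex \<open>r\<close> sits at \<open>(pos_x r, pos_y r)\<close> (defined below) on the unit circle of the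
  \<open>\<ell>\<^sub>1\<close>-norm, in cyclic order.\<close>

definition polygon_diagonal :: "nat \<Rightarrow> nat \<Rightarrow> nat \<Rightarrow> bool" where
  "polygon_diagonal n r s \<longleftrightarrow> (if n = 4 then (r=0\<and>s=2) \<or> (r=2\<and>s=0) \<or> (r=1\<and>s=3) \<or> (r=3\<and>s=1)
     else (r=0\<and>s=1) \<or> (r=1\<and>s=0) \<or> (r=0\<and>s=2) \<or> (r=2\<and>s=0) \<or> (r=2\<and>s=4) \<or> (r=4\<and>s=2)
        \<or> (r=3\<and>s=4) \<or> (r=4\<and>s=3) \<or> (r=1\<and>s=3) \<or> (r=3\<and>s=1))"

definition polygon_nbr1 :: "nat \<Rightarrow> nat \<Rightarrow> nat" where
  "polygon_nbr1 n r = (if n = 4 then [1,2,3,0] ! r else [4,4,1,2,0] ! r)"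

definition polygon_nbr2 :: "nat \<Rightarrow> nat \<Rightarrow> nat" where
  "polygon_nbr2 n r = (if n = 4 then [3,0,1,2] ! r else [3,2,3,0,1] ! r)"

lemma less_4_cases: "(r::nat) < 4 \<Longrightarrow> r = 0 \<or> r = 1 \<or> r = 2 \<or> r = 3" by auto
lemma less_5_cases: "(r::nat) < 5 \<Longrightarrow> r = 0 \<or> r = 1 \<or> r = 2 \<or> r = 3 \<or> r = 4" by auto

lemma polygon_diagonal_irrefl: "\<not> polygon_diagonal n r r"
  unfolding polygon_diagonal_def by auto

lemma polygon_diagonal_sym: "polygon_diagonal n r s = polygon_diagonal n s r"
  unfolding polygon_diagonal_def by auto

lemma polygon_nbr_square:
  assumes r: "r < 4"
  shows "polygon_nbr1 4 r < 4 \<and> polygon_nbr2 4 r < 4 \<and> polygon_nbr1 4 r \<noteq> r \<and> polygon_nbr2 4 r \<noteq> r \<and>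
    polygon_nbr1 4 r \<noteq> polygon_nbr2 4 r \<and> polygon_diagonal 4 (polygon_nbr1 4 r) (polygon_nbr2 4 r) \<and>
    \<not> polygon_diagonal 4 r (polygon_nbr1 4 r) \<and> \<not> polygon_diagonal 4 r (polygon_nbr2 4 r)"
  using less_4_cases[OF r]
  by (elim disjE) (simp_all add: polygon_nbr1_def polygon_nbr2_def polygon_diagonal_def)

lemma polygon_nbr_pentagon:
  assumes r: "r < 5"
  shows "polygon_nbr1 5 r < 5 \<and> polygon_nbr2 5 r < 5 \<and> polygon_nbr1 5 r \<noteq> r \<and> polygon_nbr2 5 r \<noteq> r \<and>
    polygon_nbr1 5 r \<noteq> polygon_nbr2 5 r \<and> polygon_diagonal 5 (polygon_nbr1 5 r) (polygon_nbr2 5 r) \<and>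
    \<not> polygon_diagonal 5 r (polygon_nbr1 5 r) \<and> \<not> polygon_diagonal 5 r (polygon_nbr2 5 r)"
  using less_5_cases[OF r]
  by (elim disjE) (simp_all add: polygon_nbr1_def polygon_nbr2_def polygon_diagonal_def)

lemma polygon_nbr:
  assumes n: "n = 4 \<or> n = 5" and r: "r < n"
  shows "polygon_nbr1 n r < n" "polygon_nbr2 n r < n" "polygon_nbr1 n r \<noteq> r" "polygon_nbr2 n r \<noteq> r"
    "polygon_nbr1 n r \<noteq> polygon_nbr2 n r" "polygon_diagonal n (polygon_nbr1 n r) (polygon_nbr2 n r)"
    "\<not> polygon_diagonal n r (polygon_nbr1 n r)" "\<not> polygon_diagonal n r (polygon_nbr2 n r)"
  using n r polygon_nbr_square[of r] polygon_nbr_pentagon[of r] by auto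

lemma polygon_nbr_cases:
  assumes n: "n = 4 \<or> n = 5" and r: "r < n" and s: "s < n" "s \<noteq> r" "\<not> polygon_diagonal n r s"
  shows "s = polygon_nbr1 n r \<or> s = polygon_nbr2 n r"
proof -
  have "s = polygon_nbr1 4 r \<or> s = polygon_nbr2 4 r" if "r < 4" "s < 4" "s \<noteq> r" "\<not> polygon_diagonal 4 r s"
    using less_4_cases[OF that(1)] less_4_cases[OF that(2)] that(3,4)
    by (elim disjE) (simp_all add: polygon_nbr1_def polygon_nbr2_def polygon_diagonal_def)
  moreover have "s = polygon_nbr1 5 r \<or> s = polygon_nbr2 5 r" if "r < 5" "s < 5" "s \<noteq> r" "\<not> polygon_diagonal 5 r s"
    using less_5_cases[OF that(1)] less_5_cases[OF that(2)] that(3,4)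
    by (elim disjE) (simp_all add: polygon_nbr1_def polygon_nbr2_def polygon_diagonal_def)
  ultimately show ?thesis using n r s by auto
qed

text \<open>Vertex \<open>(i, r)\<close> is vertex \<open>r\<close> of the \<open>i\<close>-th factor; the factors \<open>i < j\<close> are pentagons and
  the others squares. Polygons with at least four vertices are flag, so their join is the
  clique complex of the join of their graphs.\<close>

definition factor_len :: "nat \<Rightarrow> nat \<Rightarrow> nat" where
  "factor_len j i = (if i < j then 5 else 4)"

definition join_verts :: "nat \<Rightarrow> nat \<Rightarrow> (nat \<times> nat) set" where
  "join_verts k j = {(i, r). i < k \<and> r < factor_len j i}"

definition join_adj :: "nat \<Rightarrow> nat \<times> nat \<Rightarrow> nat \<times> nat \<Rightarrow> bool" where
  "join_adj j a b \<longleftrightarrow> fst a \<noteq> fst b \<or> \<not> polygon_diagonal (factor_len j (fst a)) (snd a) (snd b)"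

definition polygon_join :: "nat \<Rightarrow> nat \<Rightarrow> (nat \<times> nat) set set" where
  "polygon_join k j = clique_complex (join_adj j) (join_verts k j)"

definition join_nbhd :: "nat \<Rightarrow> nat \<Rightarrow> nat \<times> nat \<Rightarrow> (nat \<times> nat) set" where
  "join_nbhd k j u = {w \<in> join_verts k j. w \<noteq> u \<and> join_adj j u w}"

lemma factor_len_cases: "factor_len j i = 4 \<or> factor_len j i = 5"
  unfolding factor_len_def by auto

lemma join_verts_Sigma: "join_verts k j = Sigma {..<k} (\<lambda>i. {..<factor_len j i})"
  unfolding join_verts_def by auto

lemma finite_join_verts: "finite (join_verts k j)"
  unfolding join_verts_Sigma by auto

lemma simplicial_complex_polygon_join: "simplicial_complex (polygon_join k j)"
  unfolding polygon_join_def by (rule simplicial_complex_clique_complex[OF finite_join_verts])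

lemma Vert_polygon_join: "Vert (polygon_join k j) = join_verts k j"
  unfolding polygon_join_def by (rule Vert_clique_complex)

lemma link_polygon_join:
  assumes "u \<in> join_verts k j"
  shows "link u (polygon_join k j) = clique_complex (join_adj j) (join_nbhd k j u)"
proof -
  have "symp (join_adj j)"
    unfolding symp_def join_adj_def using polygon_diagonal_sym by auto
  then show ?thesis
    unfolding polygon_join_def join_nbhd_def using assms by (rule link_clique_complex)
qed

lemma mem_join_nbhd:
  assumes u: "(i, r) \<in> join_verts k j"
  shows "(x, s) \<in> join_nbhd k j (i, r) \<longleftrightarrow> x < k \<and> s < factor_len j x \<and>
     (x \<noteq> i \<or> s = polygon_nbr1 (factor_len j i) r \<or> s = polygon_nbr2 (factor_len j i) r)"
proof (cases "x = i")
  case True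
  have r: "r < factor_len j i" "i < k" using u unfolding join_verts_def by auto
  with True show ?thesis unfolding join_nbhd_def join_verts_def join_adj_def
    using polygon_nbr[OF factor_len_cases r(1)] polygon_nbr_cases[OF factor_len_cases r(1)] by auto
next
  case False
  then show ?thesis unfolding join_nbhd_def join_verts_def join_adj_def by auto
qed

text \<open>The isomorphism between two vertex links: the two neighbours of \<open>r\<close> in its own
  polygon go to the two neighbours of \<open>r'\<close>, and the other factors are permuted by \<open>\<pi>\<close>.\<close>

definition link_map :: "nat \<Rightarrow> nat \<Rightarrow> nat \<times> nat \<Rightarrow> nat \<times> nat \<Rightarrow> (nat \<Rightarrow> nat) \<Rightarrow> nat \<times> nat \<Rightarrow> nat \<times> nat" where
  "link_map j j' u u' \<pi> = (\<lambda>(x, s).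
     if x = fst u then (fst u',
       if s = polygon_nbr1 (factor_len j (fst u)) (snd u) then polygon_nbr1 (factor_len j' (fst u')) (snd u')
       else polygon_nbr2 (factor_len j' (fst u')) (snd u'))
     else (\<pi> x, s))"

lemma link_map_in_join_nbhd:
  assumes u: "(i, r) \<in> join_verts k j" and u': "(i', r') \<in> join_verts k j'"
    and \<pi>: "\<And>x. x \<in> {..<k} - {i} \<Longrightarrow> \<pi> x \<in> {..<k} - {i'} \<and> factor_len j' (\<pi> x) = factor_len j x"
    and a: "a \<in> join_nbhd k j (i, r)"
  shows "link_map j j' (i, r) (i', r') \<pi> a \<in> join_nbhd k j' (i', r')"
proof -
  obtain x s where xs: "a = (x, s)" by fastforce
  have r': "r' < factor_len j' i'" using u' unfolding join_verts_def by auto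
  note nbr' = polygon_nbr[OF factor_len_cases r']
  show ?thesis
  proof (cases "x = i")
    case True
    then show ?thesis using u' nbr' by (auto simp: xs link_map_def mem_join_nbhd[OF u'] join_verts_def)
  next
    case False
    then have "x \<in> {..<k} - {i}" using a unfolding xs mem_join_nbhd[OF u] by auto
    with False a \<pi> show ?thesis by (auto simp: xs link_map_def mem_join_nbhd[OF u] mem_join_nbhd[OF u'])
  qed
qed

lemma link_map_link_map:
  assumes u: "(i, r) \<in> join_verts k j" and u': "(i', r') \<in> join_verts k j'"
    and \<pi>: "\<And>x. x \<in> {..<k} - {i} \<Longrightarrow> \<pi> x \<noteq> i' \<and> \<pi>' (\<pi> x) = x"
    and a: "a \<in> join_nbhd k j (i, r)"
  shows "link_map j' j (i', r') (i, r) \<pi>' (link_map j j' (i, r) (i', r') \<pi> a) = a"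
proof -
  obtain x s where xs: "a = (x, s)" by fastforce
  have r: "r < factor_len j i" and r': "r' < factor_len j' i'"
    using u u' unfolding join_verts_def by auto
  note nbr = polygon_nbr[OF factor_len_cases r] and nbr' = polygon_nbr[OF factor_len_cases r']
  show ?thesis
  proof (cases "x = i")
    case True
    then show ?thesis using a nbr nbr' unfolding xs link_map_def mem_join_nbhd[OF u] by auto
  next
    case False
    then have "x \<in> {..<k} - {i}" using a unfolding xs mem_join_nbhd[OF u] by auto
    with False \<pi> show ?thesis unfolding xs link_map_def by auto
  qed
qed

lemma join_adj_link_map:
  assumes u: "(i, r) \<in> join_verts k j" and u': "(i', r') \<in> join_verts k j'"
    and \<pi>: "\<And>x. x \<in> {..<k} - {i} \<Longrightarrow> \<pi> x \<noteq> i' \<and> factor_len j' (\<pi> x) = factor_len j x"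
    and \<pi>_inj: "inj_on \<pi> ({..<k} - {i})"
    and a: "a \<in> join_nbhd k j (i, r)" and b: "b \<in> join_nbhd k j (i, r)"
  shows "join_adj j a b \<longleftrightarrow> join_adj j' (link_map j j' (i, r) (i', r') \<pi> a) (link_map j j' (i, r) (i', r') \<pi> b)"
proof -
  obtain x s where xs: "a = (x, s)" by fastforce
  obtain y t where yt: "b = (y, t)" by fastforce
  have r: "r < factor_len j i" and r': "r' < factor_len j' i'"
    using u u' unfolding join_verts_def by auto
  note nbr = polygon_nbr[OF factor_len_cases r] and nbr' = polygon_nbr[OF factor_len_cases r']
  have x: "x = i \<or> x \<in> {..<k} - {i}" and y: "y = i \<or> y \<in> {..<k} - {i}"
    using a b unfolding xs yt mem_join_nbhd[OF u] by auto
  consider "x = i" "y = i" | "x = i" "y \<noteq> i" | "x \<noteq> i" "y = i" | "x \<noteq> i" "y \<noteq> i" by blast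
  then show ?thesis
  proof cases
    case 1
    have "s = polygon_nbr1 (factor_len j i) r \<or> s = polygon_nbr2 (factor_len j i) r"
      and "t = polygon_nbr1 (factor_len j i) r \<or> t = polygon_nbr2 (factor_len j i) r"
      using a b 1 unfolding xs yt mem_join_nbhd[OF u] by auto
    with 1 nbr nbr' show ?thesis
      unfolding xs yt link_map_def join_adj_def
      using polygon_diagonal_irrefl polygon_diagonal_sym by (smt (verit) fst_conv snd_conv split_conv)
  next
    case 2
    with y \<pi> show ?thesis unfolding xs yt link_map_def join_adj_def by auto
  next
    case 3
    with x \<pi> show ?thesis unfolding xs yt link_map_def join_adj_def by auto
  next
    case 4
    with x y \<pi> \<pi>_inj show ?thesis unfolding xs yt link_map_def join_adj_def inj_on_def by auto
  qed
qed

lemma comb_equiv_link_polygon_join: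
  assumes u: "(i, r) \<in> join_verts k j" and u': "(i', r') \<in> join_verts k j'"
    and \<pi>: "bij_betw \<pi> ({..<k} - {i}) ({..<k} - {i'})"
    and len: "\<forall>x\<in>{..<k} - {i}. factor_len j' (\<pi> x) = factor_len j x"
  shows "comb_equiv (link (i, r) (polygon_join k j)) (link (i', r') (polygon_join k j'))"
proof -
  define \<pi>' where "\<pi>' = the_inv_into ({..<k} - {i}) \<pi>"
  have \<pi>': "bij_betw \<pi>' ({..<k} - {i'}) ({..<k} - {i})"
    unfolding \<pi>'_def by (rule bij_betw_the_inv_into[OF \<pi>])
  have \<pi>'_\<pi>: "\<pi>' (\<pi> x) = x" if "x \<in> {..<k} - {i}" for x
    unfolding \<pi>'_def using \<pi> that by (simp add: bij_betw_def the_inv_into_f_f)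
  have \<pi>_\<pi>': "\<pi> (\<pi>' y) = y" if "y \<in> {..<k} - {i'}" for y
    unfolding \<pi>'_def using \<pi> that by (simp add: bij_betw_def f_the_inv_into_f)
  have \<pi>_mem: "\<pi> x \<in> {..<k} - {i'}" if "x \<in> {..<k} - {i}" for x
    using \<pi> that by (auto simp: bij_betw_def)
  have \<pi>'_mem: "\<pi>' y \<in> {..<k} - {i}" if "y \<in> {..<k} - {i'}" for y
    using \<pi>' that by (auto simp: bij_betw_def)
  have len': "factor_len j (\<pi>' y) = factor_len j' y" if "y \<in> {..<k} - {i'}" for y
    using len \<pi>'_mem[OF that] \<pi>_\<pi>'[OF that] by metis
  let ?\<phi> = "link_map j j' (i, r) (i', r') \<pi>" and ?\<psi> = "link_map j' j (i', r') (i, r) \<pi>'"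
  have "bij_betw ?\<phi> (join_nbhd k j (i, r)) (join_nbhd k j' (i', r'))"
  proof (rule bij_betw_byWitness[where f'="?\<psi>"])
    show "\<forall>a\<in>join_nbhd k j (i, r). ?\<psi> (?\<phi> a) = a"
      using link_map_link_map[OF u u'] \<pi>_mem \<pi>'_\<pi> by blast
    show "\<forall>b\<in>join_nbhd k j' (i', r'). ?\<phi> (?\<psi> b) = b"
      using link_map_link_map[OF u' u] \<pi>'_mem \<pi>_\<pi>' by blast
    show "?\<phi> ` join_nbhd k j (i, r) \<subseteq> join_nbhd k j' (i', r')"
      using link_map_in_join_nbhd[OF u u'] \<pi>_mem len by blast
    show "?\<psi> ` join_nbhd k j' (i', r') \<subseteq> join_nbhd k j (i, r)"
      using link_map_in_join_nbhd[OF u' u] \<pi>'_mem len' by blast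
  qed
  moreover have "\<forall>a\<in>join_nbhd k j (i, r). \<forall>b\<in>join_nbhd k j (i, r). join_adj j a b \<longleftrightarrow> join_adj j' (?\<phi> a) (?\<phi> b)"
    using join_adj_link_map[OF u u'] \<pi>_mem len bij_betw_imp_inj_on[OF \<pi>] by blast
  ultimately show ?thesis
    unfolding link_polygon_join[OF u] link_polygon_join[OF u'] by (rule comb_equiv_clique_complex)
qed

definition skip_reindex :: "nat \<Rightarrow> nat \<Rightarrow> nat \<Rightarrow> nat" where
  "skip_reindex i i' x = (let y = (if x < i then x else x - 1) in if y < i' then y else y + 1)"

lemma bij_betw_skip_reindex:
  assumes "i < k" "i' < k"
  shows "bij_betw (skip_reindex i i') ({..<k} - {i}) ({..<k} - {i'})"
proof (rule bij_betw_byWitness[where f'="skip_reindex i' i"])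
  show "\<forall>a\<in>{..<k} - {i}. skip_reindex i' i (skip_reindex i i' a) = a"
    and "\<forall>a\<in>{..<k} - {i'}. skip_reindex i i' (skip_reindex i' i a) = a"
    and "skip_reindex i i' ` ({..<k} - {i}) \<subseteq> {..<k} - {i'}"
    and "skip_reindex i' i ` ({..<k} - {i'}) \<subseteq> {..<k} - {i}"
    using assms unfolding skip_reindex_def Let_def by (auto split: if_splits)
qed

lemma comb_equiv_link_pentagon_vertex:
  assumes j: "1 \<le> j" "j \<le> k" and u: "(i, r) \<in> join_verts k j" and i: "i < j"
  shows "comb_equiv (link (i, r) (polygon_join k j)) (link (j - 1, 0) (polygon_join k (j - 1)))"
proof (rule comb_equiv_link_polygon_join[OF u _ bij_betw_skip_reindex])
  show "(j - 1, 0) \<in> join_verts k (j - 1)" using j unfolding join_verts_def factor_len_def by auto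
  show "i < k" "j - 1 < k" using u j unfolding join_verts_def by auto
  show "\<forall>x\<in>{..<k} - {i}. factor_len (j - 1) (skip_reindex i (j - 1) x) = factor_len j x"
    using i j unfolding factor_len_def skip_reindex_def Let_def by auto
qed

lemma comb_equiv_link_square_vertex:
  assumes j: "j < k" and u: "(i, r) \<in> join_verts k j" and i: "j \<le> i"
  shows "comb_equiv (link (i, r) (polygon_join k j)) (link (j, 0) (polygon_join k j))"
proof (rule comb_equiv_link_polygon_join[OF u _ bij_betw_skip_reindex])
  show "(j, 0) \<in> join_verts k j" using j unfolding join_verts_def factor_len_def by auto
  show "i < k" "j < k" using u j unfolding join_verts_def by auto
  show "\<forall>x\<in>{..<k} - {i}. factor_len j (skip_reindex i j x) = factor_len j x"
    using i j unfolding factor_len_def skip_reindex_def Let_def by auto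
qed

definition embedded_join :: "(nat \<times> nat \<Rightarrow> 'a) \<Rightarrow> nat \<Rightarrow> nat \<Rightarrow> 'a set set" where
  "embedded_join e k j = complex_image e (polygon_join k j)"

lemma Vert_embedded_join: "inj e \<Longrightarrow> Vert (embedded_join e k j) = e ` join_verts k j"
  unfolding embedded_join_def by (simp add: Vert_complex_image Vert_polygon_join)

lemma link_embedded_join:
  "inj e \<Longrightarrow> link (e u) (embedded_join e k j) = complex_image e (link u (polygon_join k j))"
  unfolding embedded_join_def by (rule link_complex_image)

lemma flag_complex_embedded_join: "inj e \<Longrightarrow> flag_complex (embedded_join e k j)"
  unfolding embedded_join_def polygon_join_def
  by (rule flag_complex_complex_image_clique_complex[OF _ finite_join_verts])

lemma sum_Vert_embedded_join:
  assumes e: "inj e" and j: "j \<le> k"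
    and G: "\<forall>u\<in>join_verts k j. G (link (e u) (embedded_join e k j)) = (if fst u < j then W5 else W4)"
  shows "(\<Sum>v\<in>Vert (embedded_join e k j). G (link v (embedded_join e k j))) = 5 * real j * W5 + 4 * real (k - j) * W4"
proof -
  have "(\<Sum>v\<in>Vert (embedded_join e k j). G (link v (embedded_join e k j)))
      = (\<Sum>u\<in>join_verts k j. G (link (e u) (embedded_join e k j)))"
    unfolding Vert_embedded_join[OF e] using e by (simp add: sum.reindex inj_on_subset)
  also have "\<dots> = (\<Sum>u\<in>join_verts k j. if fst u < j then W5 else W4)"
    using G by (intro sum.cong) auto
  also have "\<dots> = (\<Sum>i<k. \<Sum>r<factor_len j i. (if i < j then W5 else W4))"
    using sum.Sigma[of "{..<k}" "\<lambda>i. {..<factor_len j i}" "\<lambda>i r. (if i < j then W5 else W4)"]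
    unfolding join_verts_Sigma by (simp add: split_def)
  also have "\<dots> = (\<Sum>i<k. real (factor_len j i) * (if i < j then W5 else W4))" by simp
  also have "\<dots> = (\<Sum>i\<in>{0..<j}. real (factor_len j i) * (if i < j then W5 else W4)) +
      (\<Sum>i\<in>{j..<k}. real (factor_len j i) * (if i < j then W5 else W4))"
    unfolding lessThan_atLeast0 by (rule sum.atLeastLessThan_concat[symmetric]) (use j in auto)
  also have "\<dots> = (\<Sum>i\<in>{0..<j}. 5 * W5) + (\<Sum>i\<in>{j..<k}. 4 * W4)"
    by (intro arg_cong2[where f="(+)"] sum.cong) (auto simp: factor_len_def)
  finally show ?thesis by simp
qed

section \<open>The join of polygons is a sphere\<close>

definition pos_x :: "nat \<Rightarrow> real" where "pos_x r = [1, 0, -1, 0, 1/2] ! r"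
definition pos_y :: "nat \<Rightarrow> real" where "pos_y r = [0, 1, 0, -1, 1/2] ! r"

text \<open>\<open>polygon_coord n p q\<close> are the barycentric coordinates of \<open>(p, q) / (\<bar>p\<bar> + \<bar>q\<bar>)\<close> on the
  edge of the \<open>n\<close>-gon containing it, scaled by \<open>\<bar>p\<bar> + \<bar>q\<bar>\<close>; \<open>corner_weight\<close> is the
  coordinate of the extra pentagon vertex \<open>(1/2, 1/2)\<close>, halved.\<close>

definition corner_weight :: "nat \<Rightarrow> real \<Rightarrow> real \<Rightarrow> real" where
  "corner_weight n p q = (if n = 5 then min (max p 0) (max q 0) else 0)"

definition polygon_coord :: "nat \<Rightarrow> real \<Rightarrow> real \<Rightarrow> nat \<Rightarrow> real" where
  "polygon_coord n p q r = (if r = 0 then max p 0 - corner_weight n p q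
     else if r = 1 then max q 0 - corner_weight n p q
     else if r = 2 then max (-p) 0 else if r = 3 then max (-q) 0 else 2 * corner_weight n p q)"

lemma sum_lessThan_4: "(\<Sum>r<(4::nat). f r) = f 0 + f 1 + f 2 + (f 3 :: real)"
  by (simp add: eval_nat_numeral)

lemma sum_lessThan_5: "(\<Sum>r<(5::nat). f r) = f 0 + f 1 + f 2 + f 3 + (f 4 :: real)"
  by (simp add: eval_nat_numeral)

lemma polygon_coord_of_weights_square:
  assumes nonneg: "\<forall>r<4. 0 \<le> w r" and diag: "\<forall>r<4. \<forall>s<4. polygon_diagonal 4 r s \<longrightarrow> w r = 0 \<or> w s = 0"
  defines "p \<equiv> (\<Sum>r<4. w r * pos_x r)" and "q \<equiv> (\<Sum>r<4. w r * pos_y r)"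
  shows "\<bar>p\<bar> + \<bar>q\<bar> = (\<Sum>r<4. w r) \<and> (\<forall>r<4. polygon_coord 4 p q r = w r)"
proof -
  have p: "p = w 0 - w 2" and q: "q = w 1 - w 3"
    unfolding p_def q_def sum_lessThan_4 pos_x_def pos_y_def by simp_all
  have diag': "w 0 = 0 \<or> w 2 = 0" "w 1 = 0 \<or> w 3 = 0"
    using diag[rule_format, of 0 2] diag[rule_format, of 1 3] by (simp_all add: polygon_diagonal_def)
  have "w 0 \<ge> 0" "w 1 \<ge> 0" "w 2 \<ge> 0" "w 3 \<ge> 0" using nonneg by auto
  with diag' show ?thesis
    using less_4_cases unfolding sum_lessThan_4 p q polygon_coord_def corner_weight_def by fastforce
qed

lemma polygon_coord_of_weights_pentagon:
  assumes nonneg: "\<forall>r<5. 0 \<le> w r" and diag: "\<forall>r<5. \<forall>s<5. polygon_diagonal 5 r s \<longrightarrow> w r = 0 \<or> w s = 0"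
  defines "p \<equiv> (\<Sum>r<5. w r * pos_x r)" and "q \<equiv> (\<Sum>r<5. w r * pos_y r)"
  shows "\<bar>p\<bar> + \<bar>q\<bar> = (\<Sum>r<5. w r) \<and> (\<forall>r<5. polygon_coord 5 p q r = w r)"
proof -
  have p: "p = w 0 - w 2 + w 4 / 2" and q: "q = w 1 - w 3 + w 4 / 2"
    unfolding p_def q_def sum_lessThan_5 pos_x_def pos_y_def by simp_all
  have diag': "w 0 = 0 \<or> w 1 = 0" "w 0 = 0 \<or> w 2 = 0" "w 2 = 0 \<or> w 4 = 0" "w 3 = 0 \<or> w 4 = 0"
      "w 1 = 0 \<or> w 3 = 0"
    using diag[rule_format, of 0 1] diag[rule_format, of 0 2] diag[rule_format, of 2 4]
      diag[rule_format, of 3 4] diag[rule_format, of 1 3]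
    by (simp_all add: polygon_diagonal_def)
  have "w 0 \<ge> 0" "w 1 \<ge> 0" "w 2 \<ge> 0" "w 3 \<ge> 0" "w 4 \<ge> 0" using nonneg by auto
  with diag' show ?thesis
    using less_5_cases unfolding sum_lessThan_5 p q polygon_coord_def corner_weight_def by fastforce
qed

lemma polygon_coord_of_weights:
  assumes n: "n = 4 \<or> n = 5" and "\<forall>r<n. 0 \<le> w r"
    and "\<forall>r<n. \<forall>s<n. polygon_diagonal n r s \<longrightarrow> w r = 0 \<or> w s = 0"
  shows "\<bar>\<Sum>r<n. w r * pos_x r\<bar> + \<bar>\<Sum>r<n. w r * pos_y r\<bar> = (\<Sum>r<n. w r) \<and>
     (\<forall>r<n. polygon_coord n (\<Sum>r<n. w r * pos_x r) (\<Sum>r<n. w r * pos_y r) r = w r)"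
  using assms polygon_coord_of_weights_square[of w] polygon_coord_of_weights_pentagon[of w] by auto

lemma polygon_coord_weights:
  fixes p q :: real
  assumes n: "n = 4 \<or> n = 5"
  shows "(\<forall>r<n. 0 \<le> polygon_coord n p q r)"
    and "(\<forall>r<n. \<forall>s<n. polygon_diagonal n r s \<longrightarrow> polygon_coord n p q r = 0 \<or> polygon_coord n p q s = 0)"
    and "(\<Sum>r<n. polygon_coord n p q r * pos_x r) = p"
    and "(\<Sum>r<n. polygon_coord n p q r * pos_y r) = q"
    and "(\<Sum>r<n. polygon_coord n p q r) = \<bar>p\<bar> + \<bar>q\<bar>"
  using n less_4_cases less_5_cases
  by (auto simp: polygon_coord_def corner_weight_def polygon_diagonal_def sum_lessThan_4 sum_lessThan_5
      pos_x_def pos_y_def)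

definition diagonal_free :: "(nat \<times> nat \<Rightarrow> 'a) \<Rightarrow> nat \<Rightarrow> nat \<Rightarrow> ('a \<Rightarrow> real) \<Rightarrow> bool" where
  "diagonal_free e k j x \<longleftrightarrow> (\<forall>i<k. \<forall>r<factor_len j i. \<forall>s<factor_len j i.
     polygon_diagonal (factor_len j i) r s \<longrightarrow> x (e (i, r)) = 0 \<or> x (e (i, s)) = 0)"

lemma support_mem_embedded_join:
  assumes e: "inj e"
  shows "{v. x v \<noteq> 0} \<in> embedded_join e k j \<longleftrightarrow>
    (\<forall>v. v \<notin> e ` join_verts k j \<longrightarrow> x v = 0) \<and> diagonal_free e k j x"
proof -
  have "(\<forall>a\<in>join_verts k j. \<forall>b\<in>join_verts k j. a \<noteq> b \<longrightarrow> x (e a) \<noteq> 0 \<longrightarrow> x (e b) \<noteq> 0 \<longrightarrow> join_adj j a b)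
      \<longleftrightarrow> diagonal_free e k j x"
    unfolding diagonal_free_def join_verts_def join_adj_def using polygon_diagonal_irrefl by fastforce
  then show ?thesis
    unfolding embedded_join_def polygon_join_def mem_complex_image_clique_complex[OF e] by auto
qed

lemma sum_support_embedded_join:
  assumes e: "inj e" and supp: "\<forall>v. v \<notin> e ` join_verts k j \<longrightarrow> x v = 0"
  shows "(\<Sum>v\<in>{v. x v \<noteq> 0}. x v) = (\<Sum>i<k. \<Sum>r<factor_len j i. x (e (i, r)))"
proof -
  have "(\<Sum>v\<in>{v. x v \<noteq> 0}. x v) = (\<Sum>v\<in>e ` join_verts k j. x v)"
    by (rule sum.mono_neutral_left) (use supp finite_join_verts in auto)
  also have "\<dots> = (\<Sum>u\<in>join_verts k j. x (e u))"
    using e by (simp add: sum.reindex inj_on_subset)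
  also have "\<dots> = (\<Sum>i<k. \<Sum>r<factor_len j i. x (e (i, r)))"
    unfolding join_verts_Sigma using sum.Sigma[of "{..<k}" "\<lambda>i. {..<factor_len j i}" "\<lambda>i r. x (e (i, r))"]
    by (simp add: split_def)
  finally show ?thesis .
qed

lemma mem_realization_embedded_join:
  assumes e: "inj e"
  shows "x \<in> realization (embedded_join e k j) \<longleftrightarrow> (\<forall>v. 0 \<le> x v) \<and> (\<forall>v. v \<notin> e ` join_verts k j \<longrightarrow> x v = 0) \<and>
     diagonal_free e k j x \<and> (\<Sum>i<k. \<Sum>r<factor_len j i. x (e (i, r))) = 1"
proof -
  have "x \<in> realization (embedded_join e k j) \<longleftrightarrow>
      (\<forall>v. 0 \<le> x v) \<and> {v. x v \<noteq> 0} \<in> embedded_join e k j \<and> (\<Sum>v\<in>{v. x v \<noteq> 0}. x v) = 1"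
    unfolding realization_def by simp
  then show ?thesis unfolding support_mem_embedded_join[OF e]
    using sum_support_embedded_join[OF e, of k j x] by (cases "\<forall>v. v \<notin> e ` join_verts k j \<longrightarrow> x v = 0") auto
qed

lemma sum_lessThan_double: "(\<Sum>n<2 * (k::nat). f n) = (\<Sum>i<k. f (2 * i) + f (2 * i + 1) :: real)"
  by (induction k) (auto simp: sum.lessThan_Suc)

definition l1_sphere :: "nat \<Rightarrow> (nat \<Rightarrow> real) set" where
  "l1_sphere k = {y. (\<Sum>n<2 * k. \<bar>y n\<bar>) = 1 \<and> (\<forall>n\<ge>2 * k. y n = 0)}"

text \<open>Factor \<open>i\<close> of the join is drawn on the \<open>\<ell>\<^sub>1\<close> unit circle of the coordinates \<open>2 i, 2 i + 1\<close>;
  together these maps identify the realization with the \<open>\<ell>\<^sub>1\<close> unit sphere of \<open>\<real>\<^sup>2\<^sup>k\<close>.\<close>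

definition join_to_l1 :: "(nat \<times> nat \<Rightarrow> 'a) \<Rightarrow> nat \<Rightarrow> nat \<Rightarrow> ('a \<Rightarrow> real) \<Rightarrow> nat \<Rightarrow> real" where
  "join_to_l1 e k j x = (\<lambda>n. if n < 2 * k then (if even n
       then (\<Sum>r<factor_len j (n div 2). x (e (n div 2, r)) * pos_x r)
       else (\<Sum>r<factor_len j (n div 2). x (e (n div 2, r)) * pos_y r)) else 0)"

definition l1_to_join :: "(nat \<times> nat \<Rightarrow> 'a) \<Rightarrow> nat \<Rightarrow> nat \<Rightarrow> (nat \<Rightarrow> real) \<Rightarrow> 'a \<Rightarrow> real" where
  "l1_to_join e k j y = (\<lambda>a. if a \<in> e ` join_verts k j then
      polygon_coord (factor_len j (fst (inv e a))) (y (2 * fst (inv e a))) (y (2 * fst (inv e a) + 1)) (snd (inv e a))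
      else 0)"

lemma join_to_l1_even: "i < k \<Longrightarrow> join_to_l1 e k j x (2 * i) = (\<Sum>r<factor_len j i. x (e (i, r)) * pos_x r)"
  unfolding join_to_l1_def by simp

lemma join_to_l1_odd: "i < k \<Longrightarrow> join_to_l1 e k j x (2 * i + 1) = (\<Sum>r<factor_len j i. x (e (i, r)) * pos_y r)"
  unfolding join_to_l1_def by simp

lemma l1_to_join_vertex:
  "inj e \<Longrightarrow> i < k \<Longrightarrow> r < factor_len j i \<Longrightarrow>
    l1_to_join e k j y (e (i, r)) = polygon_coord (factor_len j i) (y (2 * i)) (y (2 * i + 1)) r"
  unfolding l1_to_join_def join_verts_def by simp

lemma realization_to_l1_sphere:
  assumes e: "inj e" and x: "x \<in> realization (embedded_join e k j)"
  shows "join_to_l1 e k j x \<in> l1_sphere k" and "l1_to_join e k j (join_to_l1 e k j x) = x"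
proof -
  note x' = x[unfolded mem_realization_embedded_join[OF e]]
  have factor: "\<bar>join_to_l1 e k j x (2 * i)\<bar> + \<bar>join_to_l1 e k j x (2 * i + 1)\<bar> = (\<Sum>r<factor_len j i. x (e (i, r))) \<and>
     (\<forall>r<factor_len j i. polygon_coord (factor_len j i) (join_to_l1 e k j x (2 * i)) (join_to_l1 e k j x (2 * i + 1)) r
        = x (e (i, r)))" if i: "i < k" for i
    unfolding join_to_l1_even[OF i] join_to_l1_odd[OF i]
    by (rule polygon_coord_of_weights[OF factor_len_cases]) (use x' i in \<open>auto simp: diagonal_free_def\<close>)
  have "(\<Sum>n<2 * k. \<bar>join_to_l1 e k j x n\<bar>) = (\<Sum>i<k. \<Sum>r<factor_len j i. x (e (i, r)))"
    unfolding sum_lessThan_double using factor by (intro sum.cong) auto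
  then show "join_to_l1 e k j x \<in> l1_sphere k" using x' unfolding l1_sphere_def by (auto simp: join_to_l1_def)
  show "l1_to_join e k j (join_to_l1 e k j x) = x"
  proof
    fix a show "l1_to_join e k j (join_to_l1 e k j x) a = x a"
    proof (cases "a \<in> e ` join_verts k j")
      case True
      then obtain i r where "i < k" "r < factor_len j i" "a = e (i, r)" unfolding join_verts_def by auto
      then show ?thesis using l1_to_join_vertex[OF e] factor by auto
    next
      case False
      then show ?thesis using x' unfolding l1_to_join_def by auto
    qed
  qed
qed

lemma l1_to_join_mem_realization:
  assumes e: "inj e" and y: "y \<in> l1_sphere k"
  shows "l1_to_join e k j y \<in> realization (embedded_join e k j)"
  unfolding mem_realization_embedded_join[OF e]
proof (intro conjI)
  note coord = polygon_coord_weights[OF factor_len_cases]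
  note vertex = l1_to_join_vertex[OF e]
  show "\<forall>v. 0 \<le> l1_to_join e k j y v"
  proof
    fix v show "0 \<le> l1_to_join e k j y v"
    proof (cases "v \<in> e ` join_verts k j")
      case True
      then obtain i r where "i < k" "r < factor_len j i" "v = e (i, r)" unfolding join_verts_def by auto
      then show ?thesis using vertex coord(1) by auto
    qed (simp add: l1_to_join_def)
  qed
  show "\<forall>v. v \<notin> e ` join_verts k j \<longrightarrow> l1_to_join e k j y v = 0"
    unfolding l1_to_join_def by auto
  show "diagonal_free e k j (l1_to_join e k j y)"
    unfolding diagonal_free_def using vertex coord(2) by simp
  have "(\<Sum>i<k. \<Sum>r<factor_len j i. l1_to_join e k j y (e (i, r))) = (\<Sum>i<k. \<bar>y (2 * i)\<bar> + \<bar>y (2 * i + 1)\<bar>)"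
    using vertex coord(5) by (intro sum.cong) auto
  also have "\<dots> = 1" using y unfolding l1_sphere_def sum_lessThan_double by simp
  finally show "(\<Sum>i<k. \<Sum>r<factor_len j i. l1_to_join e k j y (e (i, r))) = 1" .
qed

lemma join_to_l1_l1_to_join:
  assumes e: "inj e" and y: "y \<in> l1_sphere k"
  shows "join_to_l1 e k j (l1_to_join e k j y) = y"
proof
  note coord = polygon_coord_weights[OF factor_len_cases]
  note vertex = l1_to_join_vertex[OF e]
  fix n show "join_to_l1 e k j (l1_to_join e k j y) n = y n"
  proof (cases "n < 2 * k")
    case True
    define i where "i = n div 2"
    have i: "i < k" using True unfolding i_def by auto
    have "n = 2 * i \<or> n = 2 * i + 1" unfolding i_def by presburger
    then show ?thesis
    proof
      assume n: "n = 2 * i"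
      show ?thesis unfolding n join_to_l1_even[OF i] using vertex[OF i] coord(3) by simp
    next
      assume n: "n = 2 * i + 1"
      show ?thesis unfolding n join_to_l1_odd[OF i] using vertex[OF i] coord(4) by simp
    qed
  next
    case False
    then show ?thesis using y unfolding join_to_l1_def l1_sphere_def by auto
  qed
qed

lemma continuous_map_polygon_coord [continuous_intros]:
  assumes "continuous_map X euclideanreal f" "continuous_map X euclideanreal g"
  shows "continuous_map X euclideanreal (\<lambda>y. polygon_coord n (f y) (g y) r)"
  unfolding polygon_coord_def corner_weight_def using assms by (intro continuous_intros) auto

lemma topspace_realization_top: "topspace (realization_top K) = realization K"
  unfolding realization_top_def by simp

lemma realization_homeomorphic_l1_sphere:
  assumes e: "inj e"
  shows "realization_top (embedded_join e k j) homeomorphic_space subtopology (powertop_real UNIV) (l1_sphere k)"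
proof (rule homeomorphic_maps_imp_homeomorphic_space)
  show "homeomorphic_maps (realization_top (embedded_join e k j)) (subtopology (powertop_real UNIV) (l1_sphere k))
      (join_to_l1 e k j) (l1_to_join e k j)"
    unfolding homeomorphic_maps_def
  proof (intro conjI ballI)
    show "continuous_map (realization_top (embedded_join e k j)) (subtopology (powertop_real UNIV) (l1_sphere k))
        (join_to_l1 e k j)"
      unfolding continuous_map_in_subtopology
    proof
      show "continuous_map (realization_top (embedded_join e k j)) (powertop_real UNIV) (join_to_l1 e k j)"
        unfolding continuous_map_componentwise_UNIV realization_top_def join_to_l1_def
        by (intro allI continuous_intros) auto
      show "join_to_l1 e k j \<in> topspace (realization_top (embedded_join e k j)) \<rightarrow> l1_sphere k"
        using realization_to_l1_sphere[OF e] unfolding topspace_realization_top by auto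
    qed
    show "continuous_map (subtopology (powertop_real UNIV) (l1_sphere k)) (realization_top (embedded_join e k j))
        (l1_to_join e k j)"
      unfolding realization_top_def continuous_map_in_subtopology
    proof
      show "continuous_map (subtopology (powertop_real UNIV) (l1_sphere k)) (powertop_real UNIV) (l1_to_join e k j)"
        unfolding continuous_map_componentwise_UNIV l1_to_join_def
        by (intro allI continuous_intros) auto
      show "l1_to_join e k j \<in> topspace (subtopology (powertop_real UNIV) (l1_sphere k)) \<rightarrow> realization (embedded_join e k j)"
        using l1_to_join_mem_realization[OF e] by auto
    qed
  qed (use realization_to_l1_sphere[OF e] join_to_l1_l1_to_join[OF e] in \<open>auto simp: topspace_realization_top\<close>)
qed

definition l2_sphere :: "nat \<Rightarrow> (nat \<Rightarrow> real) set" where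
  "l2_sphere k = {x. (\<Sum>i<2 * k. (x i)\<^sup>2) = 1 \<and> (\<forall>i\<ge>2 * k. x i = 0)}"

lemma nsphere_eq_l2_sphere:
  assumes k: "k \<ge> 1"
  shows "nsphere (2 * k - 1) = subtopology (powertop_real UNIV) (l2_sphere k)"
proof -
  have "{..2 * k - 1} = {..<2 * k}" using k by auto
  moreover have "i > 2 * k - 1 \<longleftrightarrow> i \<ge> 2 * k" for i using k by auto
  ultimately show ?thesis unfolding nsphere l2_sphere_def by simp
qed

definition l1_norm :: "nat \<Rightarrow> (nat \<Rightarrow> real) \<Rightarrow> real" where
  "l1_norm k y = (\<Sum>m<2 * k. \<bar>y m\<bar>)"

definition l2_norm :: "nat \<Rightarrow> (nat \<Rightarrow> real) \<Rightarrow> real" where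
  "l2_norm k y = sqrt (\<Sum>m<2 * k. (y m)\<^sup>2)"

lemma l1_norm_pos: "y \<in> l2_sphere k \<Longrightarrow> l1_norm k y > 0"
proof -
  assume "y \<in> l2_sphere k"
  then obtain m where "m < 2 * k" "y m \<noteq> 0"
    unfolding l2_sphere_def by (metis (mono_tags, lifting) lessThan_iff power_zero_numeral sum.neutral zero_neq_one mem_Collect_eq)
  then have "0 < \<bar>y m\<bar>" by simp
  also have "\<bar>y m\<bar> \<le> l1_norm k y" unfolding l1_norm_def using \<open>m < 2 * k\<close> by (intro member_le_sum) auto
  finally show ?thesis .
qed

lemma l2_norm_pos: "y \<in> l1_sphere k \<Longrightarrow> l2_norm k y > 0"
proof -
  assume "y \<in> l1_sphere k"
  then obtain m where "m < 2 * k" "y m \<noteq> 0"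
    unfolding l1_sphere_def by (metis (mono_tags, lifting) lessThan_iff abs_zero sum.neutral zero_neq_one mem_Collect_eq)
  then have "0 < (y m)\<^sup>2" by simp
  also have "(y m)\<^sup>2 \<le> (\<Sum>m<2 * k. (y m)\<^sup>2)" using \<open>m < 2 * k\<close> by (intro member_le_sum) auto
  finally show ?thesis unfolding l2_norm_def by simp
qed

lemma l1_sphere_to_l2_sphere:
  assumes y: "y \<in> l1_sphere k"
  shows "(\<lambda>n. y n / l2_norm k y) \<in> l2_sphere k" and "l1_norm k (\<lambda>n. y n / l2_norm k y) = 1 / l2_norm k y"
proof -
  have N: "l2_norm k y > 0" by (rule l2_norm_pos[OF y])
  then have S: "(\<Sum>i<2 * k. (y i)\<^sup>2) > 0" unfolding l2_norm_def by simp
  have "(\<Sum>i<2 * k. (y i / l2_norm k y)\<^sup>2) = (\<Sum>i<2 * k. (y i)\<^sup>2) / (l2_norm k y)\<^sup>2"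
    by (simp add: power_divide sum_divide_distrib)
  also have "(l2_norm k y)\<^sup>2 = (\<Sum>i<2 * k. (y i)\<^sup>2)" unfolding l2_norm_def by (simp add: sum_nonneg)
  finally have "(\<Sum>i<2 * k. (y i / l2_norm k y)\<^sup>2) = 1" using S by simp
  then show "(\<lambda>n. y n / l2_norm k y) \<in> l2_sphere k" using N y unfolding l2_sphere_def l1_sphere_def by auto
  show "l1_norm k (\<lambda>n. y n / l2_norm k y) = 1 / l2_norm k y"
    using N y unfolding l1_norm_def l1_sphere_def by (simp add: sum_divide_distrib[symmetric])
qed

lemma l2_sphere_to_l1_sphere:
  assumes z: "z \<in> l2_sphere k"
  shows "(\<lambda>n. z n / l1_norm k z) \<in> l1_sphere k" and "l2_norm k (\<lambda>n. z n / l1_norm k z) = 1 / l1_norm k z"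
proof -
  have N: "l1_norm k z > 0" by (rule l1_norm_pos[OF z])
  have "(\<Sum>i<2 * k. \<bar>z i / l1_norm k z\<bar>) = (\<Sum>i<2 * k. \<bar>z i\<bar>) / l1_norm k z"
    using N by (simp add: sum_divide_distrib)
  also have "\<dots> = 1" using N unfolding l1_norm_def by simp
  finally have "(\<Sum>i<2 * k. \<bar>z i / l1_norm k z\<bar>) = 1" .
  then show "(\<lambda>n. z n / l1_norm k z) \<in> l1_sphere k" using N z unfolding l1_sphere_def l2_sphere_def by auto
  have "(\<Sum>i<2 * k. (z i / l1_norm k z)\<^sup>2) = 1 / (l1_norm k z)\<^sup>2"
    using z unfolding l2_sphere_def by (simp add: power_divide sum_divide_distrib[symmetric])
  then show "l2_norm k (\<lambda>n. z n / l1_norm k z) = 1 / l1_norm k z"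
    unfolding l2_norm_def using N by (simp add: real_sqrt_divide)
qed

lemma continuous_map_normalize:
  assumes N: "continuous_map (subtopology (powertop_real UNIV) S) euclideanreal N"
    and nonzero: "\<And>y. y \<in> S \<Longrightarrow> N y \<noteq> 0"
  shows "continuous_map (subtopology (powertop_real UNIV) S) (powertop_real UNIV) (\<lambda>y n. y n / N y)"
  unfolding continuous_map_componentwise_UNIV
  using nonzero by (intro allI continuous_intros N) auto

lemma l1_sphere_homeomorphic_nsphere:
  assumes k: "k \<ge> 1"
  shows "subtopology (powertop_real UNIV) (l1_sphere k) homeomorphic_space nsphere (2 * k - 1)"
  unfolding nsphere_eq_l2_sphere[OF k]
proof (rule homeomorphic_maps_imp_homeomorphic_space)
  let ?f = "\<lambda>y n. y n / l2_norm k y" and ?g = "\<lambda>z n. z n / l1_norm k z"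
  have cont_l1: "continuous_map (subtopology (powertop_real UNIV) S) euclideanreal (l1_norm k)" for S
    unfolding l1_norm_def by (intro continuous_intros) auto
  have cont_l2: "continuous_map (subtopology (powertop_real UNIV) S) euclideanreal (l2_norm k)" for S
    unfolding l2_norm_def by (intro continuous_intros) auto
  show "homeomorphic_maps (subtopology (powertop_real UNIV) (l1_sphere k)) (subtopology (powertop_real UNIV) (l2_sphere k)) ?f ?g"
    unfolding homeomorphic_maps_def continuous_map_in_subtopology
  proof (intro conjI ballI)
    show "continuous_map (subtopology (powertop_real UNIV) (l1_sphere k)) (powertop_real UNIV) ?f"
      using cont_l2 l2_norm_pos by (intro continuous_map_normalize) force+
    show "continuous_map (subtopology (powertop_real UNIV) (l2_sphere k)) (powertop_real UNIV) ?g"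
      using cont_l1 l1_norm_pos by (intro continuous_map_normalize) force+
    fix y assume "y \<in> topspace (subtopology (powertop_real UNIV) (l1_sphere k))"
    then have y: "y \<in> l1_sphere k" by simp
    then show "?g (?f y) = y" using l1_sphere_to_l2_sphere(2)[OF y] l2_norm_pos[OF y] by auto
  next
    fix z assume "z \<in> topspace (subtopology (powertop_real UNIV) (l2_sphere k))"
    then have z: "z \<in> l2_sphere k" by simp
    then show "?f (?g z) = z" using l2_sphere_to_l1_sphere(2)[OF z] l1_norm_pos[OF z] by auto
  qed (use l1_sphere_to_l2_sphere l2_sphere_to_l1_sphere in auto)
qed

lemma flag_sphere_embedded_join:
  assumes e: "inj e" and k: "k \<ge> 1"
  shows "flag_sphere (2 * k - 1) (embedded_join e k j)"
  unfolding flag_sphere_def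
  using flag_complex_embedded_join[OF e] homeomorphic_space_trans[OF
      realization_homeomorphic_l1_sphere[OF e] l1_sphere_homeomorphic_nsphere[OF k]] by blast

section \<open>Non-locality of the constant term\<close>

lemma five_four_recurrence_const_eq_0:
  fixes U :: "nat \<Rightarrow> real"
  assumes k: "k \<ge> 1" and rec: "\<forall>j\<le>k. c = 5 * real j * U (j - 1) + 4 * real (k - j) * U j"
  shows "c = 0"
proof -
  define w where "w i = real (k choose i) * (-4) ^ i * 5 ^ (k - i)" for i
  have w_step: "5 * real (Suc j) * w (Suc j) = - 4 * real (k - j) * w j" if "j < k" for j
  proof -
    have "Suc j * (k choose Suc j) = (k - j) * (k choose j)"
      using binomial_absorption[of j k] binomial_absorb_comp[of k j] by simp
    then have binom: "real (Suc j) * real (k choose Suc j) = real (k - j) * real (k choose j)"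
      by (metis of_nat_mult)
    have pow5: "(5::real) ^ (k - j) = 5 * 5 ^ (k - Suc j)" using that
      by (metis Suc_diff_Suc power_Suc)
    have "5 * real (Suc j) * w (Suc j) = (real (Suc j) * real (k choose Suc j)) * (-4) ^ Suc j * (5 * 5 ^ (k - Suc j))"
      unfolding w_def by simp
    also have "\<dots> = real (k - j) * real (k choose j) * (-4) ^ Suc j * 5 ^ (k - j)" using binom pow5 by simp
    also have "\<dots> = - 4 * real (k - j) * w j" unfolding w_def by simp
    finally show ?thesis .
  qed
  have partial: "4 * real (k - j) * w j * U j = c * (\<Sum>i\<le>j. w i)" if "j < k" for j
    using that
  proof (induction j)
    case 0
    then show ?case using rec by auto
  next
    case (Suc j)
    have rec_j: "c = 5 * real (Suc j) * U j + 4 * real (k - Suc j) * U (Suc j)"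
      using rec Suc.prems by (metis diff_Suc_1 less_imp_le_nat)
    have "c * w (Suc j) = 5 * real (Suc j) * w (Suc j) * U j + 4 * real (k - Suc j) * w (Suc j) * U (Suc j)"
      using rec_j by (simp add: algebra_simps)
    also have "5 * real (Suc j) * w (Suc j) * U j = (- 4 * real (k - j) * w j) * U j"
      using w_step[of j] Suc.prems by (metis Suc_lessD)
    finally have step: "c * w (Suc j) = - (4 * real (k - j) * w j * U j) + 4 * real (k - Suc j) * w (Suc j) * U (Suc j)"
      by simp
    have "4 * real (k - j) * w j * U j = c * (\<Sum>i\<le>j. w i)" using Suc by simp
    with step show ?case by (simp add: algebra_simps)
  qed
  obtain m where m: "k = Suc m" using k by (cases k) auto
  have "c * w k = 5 * real k * w k * U m" using rec m by auto
  also have "\<dots> = - 4 * w m * U m" using w_step[of m] m by simp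
  finally have "c * (\<Sum>i\<le>k. w i) = 0" using partial[of m] m by (simp add: algebra_simps)
  moreover have "(\<Sum>i\<le>k. w i) = 1"
    using binomial_ring[of "-4::real" 5 k] unfolding w_def by simp
  ultimately show ?thesis by simp
qed

lemma ex_inj_nat_prod:
  assumes "infinite (UNIV :: 'a set)"
  obtains e :: "nat \<times> nat \<Rightarrow> 'a" where "inj e"
proof -
  obtain f :: "nat \<Rightarrow> 'a" where "inj f" using infinite_countable_subset[OF assms] by blast
  then have "inj (f \<circ> prod_encode)" using inj_prod_encode[of UNIV] by (simp add: inj_compose)
  then show thesis by (rule that)
qed

lemma link_invariant_sum_embedded_join:
  assumes e: "inj e" and j: "j \<le> k"
    and joins: "\<forall>j. embedded_join e k j \<in> T"
    and G: "\<forall>L1\<in>Links T. \<forall>L2\<in>Links T. comb_equiv L1 L2 \<longrightarrow> G L1 = G L2"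
  shows "(\<Sum>v\<in>Vert (embedded_join e k j). G (link v (embedded_join e k j)))
    = 5 * real j * G (link (e (j - 1, 0)) (embedded_join e k (j - 1)))
      + 4 * real (k - j) * G (link (e (j, 0)) (embedded_join e k j))"
proof (rule sum_Vert_embedded_join[OF e j], intro ballI)
  have in_Links: "link (e u) (embedded_join e k m) \<in> Links T" if "u \<in> join_verts k m" for u m
    unfolding Links_def using joins Vert_embedded_join[OF e, of k m] that by blast
  have G_link: "G (link (e u) (embedded_join e k m)) = G (link (e u') (embedded_join e k m'))"
    if "u \<in> join_verts k m" "u' \<in> join_verts k m'"
      "comb_equiv (link u (polygon_join k m)) (link u' (polygon_join k m'))" for u u' m m'
    using G in_Links[OF that(1)] in_Links[OF that(2)] comb_equiv_complex_image[OF e that(3)]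
    by (simp add: link_embedded_join[OF e])
  fix u assume u: "u \<in> join_verts k j"
  obtain i r where ir: "u = (i, r)" by fastforce
  show "G (link (e u) (embedded_join e k j)) = (if fst u < j
      then G (link (e (j - 1, 0)) (embedded_join e k (j - 1)))
      else G (link (e (j, 0)) (embedded_join e k j)))"
  proof (cases "i < j")
    case True
    then have "(j - 1, 0) \<in> join_verts k (j - 1)" using j unfolding join_verts_def factor_len_def by auto
    with True show ?thesis
      using G_link u comb_equiv_link_pentagon_vertex[OF _ j u[unfolded ir] True] unfolding ir by simp
  next
    case False
    then have "j < k" using u unfolding ir join_verts_def by auto
    then have "(j, 0) \<in> join_verts k j" unfolding join_verts_def factor_len_def by auto
    with False \<open>j < k\<close> show ?thesis
      using G_link u comb_equiv_link_square_vertex[OF \<open>j < k\<close> u[unfolded ir]] unfolding ir by simp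
  qed
qed

lemma not_comb_locally_determined_if_flag_spheres:
  fixes T :: "'a set set set"
  assumes complexes: "\<forall>K\<in>T. simplicial_complex K"
    and \<Lambda>: "\<forall>K\<in>T. \<Lambda> K = (\<Sum>i\<in>{-1..cdim K}. b i * real (fnum K i))"
    and b: "b (-1) \<noteq> 0" and infinite: "infinite (UNIV :: 'a set)"
    and d: "odd d" "d \<ge> 3" and spheres: "{K. flag_sphere d K} \<subseteq> T"
  shows "\<not> comb_locally_determined T \<Lambda>"
proof
  assume "comb_locally_determined T \<Lambda>"
  then obtain G where G: "\<forall>L1\<in>Links T. \<forall>L2\<in>Links T. comb_equiv L1 L2 \<longrightarrow> G L1 = G L2"
    and G_sum: "\<forall>K\<in>T. (\<Sum>v\<in>Vert K. G (link v K)) = b (-1)"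
    by (rule comb_locally_determined_obtains_link_invariant[OF complexes \<Lambda>])
  obtain e :: "nat \<times> nat \<Rightarrow> 'a" where e: "inj e" using ex_inj_nat_prod[OF infinite] by blast
  define k where "k = (d + 1) div 2"
  have k: "k \<ge> 1" "2 * k - 1 = d" using d unfolding k_def by (auto elim: oddE)
  have joins: "\<forall>j. embedded_join e k j \<in> T"
    using flag_sphere_embedded_join[OF e k(1)] k(2) spheres by auto
  have "\<forall>j\<le>k. b (-1) = 5 * real j * G (link (e (j - 1, 0)) (embedded_join e k (j - 1)))
      + 4 * real (k - j) * G (link (e (j, 0)) (embedded_join e k j))"
  proof (intro allI impI)
    fix j assume "j \<le> k"
    from G_sum joins have "b (-1) = (\<Sum>v\<in>Vert (embedded_join e k j). G (link v (embedded_join e k j)))"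
      by simp
    then show "b (-1) = 5 * real j * G (link (e (j - 1, 0)) (embedded_join e k (j - 1)))
        + 4 * real (k - j) * G (link (e (j, 0)) (embedded_join e k j))"
      by (simp add: link_invariant_sum_embedded_join[OF e \<open>j \<le> k\<close> joins G])
  qed
  then have "b (-1) = 0" by (rule five_four_recurrence_const_eq_0[OF k(1)])
  with b show False ..
qed

theorem theorem1p2:
  fixes T :: "'a set set set" and \<Lambda> :: "'a set set \<Rightarrow> real" and b :: "int \<Rightarrow> real"
  assumes complexes: "\<forall>K\<in>T. simplicial_complex K"
    and Lambda_eq: "\<forall>K\<in>T. \<Lambda> K = (\<Sum>i\<in>{-1..cdim K}. b i * real (fnum K i))"
  shows "((\<exists>c. c \<noteq> 0 \<and> (\<forall>K\<in>T. euler_char K = c)) \<longrightarrow> comb_locally_determined T \<Lambda>)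
       \<and> (b (-1) = 0 \<longrightarrow> comb_locally_determined T \<Lambda>)
       \<and> ((b (-1) \<noteq> 0 \<and> infinite (UNIV :: 'a set) \<and>
           (\<exists>d::nat. odd d \<and> d \<ge> 3 \<and> {K. flag_sphere d K} \<subseteq> T))
          \<longrightarrow> \<not> comb_locally_determined T \<Lambda>)"
proof (intro conjI impI)
  assume "\<exists>c. c \<noteq> 0 \<and> (\<forall>K\<in>T. euler_char K = c)"
  then obtain c where "c \<noteq> 0" "\<forall>K\<in>T. euler_char K = c" by blast
  then show "comb_locally_determined T \<Lambda>"
    by (rule comb_locally_determined_if_euler_char_const[OF complexes Lambda_eq])
next
  assume "b (-1) = 0"
  then show "comb_locally_determined T \<Lambda>"
    by (rule comb_locally_determined_if_empty_coeff_0[OF complexes Lambda_eq])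
next
  assume "b (-1) \<noteq> 0 \<and> infinite (UNIV :: 'a set) \<and> (\<exists>d::nat. odd d \<and> d \<ge> 3 \<and> {K. flag_sphere d K} \<subseteq> T)"
  then show "\<not> comb_locally_determined T \<Lambda>"
    using not_comb_locally_determined_if_flag_spheres[OF complexes Lambda_eq] by blast
qed

end
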